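(* For real $0\le x<1$, $$\log\mathcal C_2\left(\frac x2\right)=\frac x2 \log(2\pi)+\log\sqrt\pi-\frac12\log\left(\cos\frac{\pi x}{2}\right)+\log\frac{G_{\mathrm B} \left(\frac12-\frac x{2}\right)}{G_{\mathrm B} \left(\frac32+\frac x2\right)}.$$
   Context: $G_{\mathrm B}$ denotes the Barnes $G$-function ($G_{\mathrm B}(z+1)=\Gamma(z)G_{\mathrm B}(z)$, $G_{\mathrm B}(1)=1$), positive on $(0,\infty)$. For real $|x|<\frac12$, $\mathcal C_2(x)=\prod_{n\ge1,\ n\text{ odd}}\left\{\left(\frac{1-\frac{x}{n/2}}{1+\frac{x}{n/2}}\right)^{n/2}e^{2x}\right\}$ (the double cosine function of Kurokawa–Koyama; a convergent positive product), and $\log$ is the real logarithm. *)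

theory Defs
  imports "HOL-Analysis.Analysis"
begin

text \<open>Used for arguments w > 0 (z = w - 1 > -1), where all factors are positive.\<close>
definition barnesG :: "real \<Rightarrow> real" where
  "barnesG w = (let z = w - 1 in
     (2 * pi) powr (z / 2) * exp (- (z + (1 + euler_mascheroni) * z\<^sup>2) / 2) *
     (\<Prod>k. (1 + z / real (Suc k)) ^ (Suc k) * exp (- z + z\<^sup>2 / (2 * real (Suc k)))))"

text \<open>Kurokawa--Koyama double cosine C_2(x) for real |x| < 1/2: product over odd n = 2k+1.\<close>
definition doubleCosine2 :: "real \<Rightarrow> real" where
  "doubleCosine2 x = (\<Prod>k. let n = real (2 * k + 1) in
     ((1 - x / (n / 2)) / (1 + x / (n / 2))) powr (n / 2) * exp (2 * x))"

end

theory Submission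
  imports Defs
begin

text \<open>Taking logarithms turns both infinite products into series. Put \<open>c = (1 + x) / 2\<close>.
  The log of the \<open>k\<close>-th Weierstrass factor of \<open>G(1 - c)\<close>, minus that of \<open>G(1 + c)\<close>,
  minus the log of the \<open>k\<close>-th factor of \<open>C\<^sub>2(x/2)\<close>, telescopes: the partial sums up to \<open>n\<close>
  are \<open>(1/2) \<Sum>k<n. ln ((2k+1)\<^sup>2 - x\<^sup>2) - n ln (2n + 1 + x) + n\<close>. Euler's product for
  \<open>cos (\<pi> x / 2)\<close> over odd denominators, together with the bound
  \<open>0 \<le> r(n) - r(n+1) \<le> 1/(12n) - 1/(12(n+1))\<close> on the Stirling remainder \<open>r\<close>, shows that these
  partial sums tend to \<open>ln (cos (\<pi> x / 2)) / 2 + ln 2 / 2 - c\<close>; only \<open>r(2n) - r(n) \<longrightarrow> 0\<close> is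
  used, so Stirling's constant never enters. Comparing the two Weierstrass products then gives
  the formula.\<close>

lemma ln_one_plus_ge_quadratic:
  fixes u :: real
  assumes "0 \<le> u"
  shows "u - u\<^sup>2 / 2 \<le> ln (1 + u)"
proof -
  let ?f = "\<lambda>v::real. ln (1 + v) - (v - v\<^sup>2 / 2)"
  have "?f 0 \<le> ?f u"
  proof (rule DERIV_nonneg_imp_nondecreasing[OF assms])
    fix v :: real assume "0 \<le> v" "v \<le> u"
    then have v: "1 + v > 0" by simp
    have "(?f has_real_derivative (1 / (1 + v) - (1 - v))) (at v)"
      using v by (auto intro!: derivative_eq_intros simp: power2_eq_square)
    moreover have "1 / (1 + v) - (1 - v) = v\<^sup>2 / (1 + v)"
      using v by (simp add: field_simps power2_eq_square)
    ultimately show "\<exists>y. (?f has_real_derivative y) (at v) \<and> 0 \<le> y"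
      using v by fastforce
  qed
  then show ?thesis by simp
qed

lemma ln_one_plus_le_cubic:
  fixes u :: real
  assumes "0 \<le> u"
  shows "ln (1 + u) \<le> u - u\<^sup>2 / 2 + u ^ 3 / 3"
proof -
  let ?f = "\<lambda>v::real. (v - v\<^sup>2 / 2 + v ^ 3 / 3) - ln (1 + v)"
  have "?f 0 \<le> ?f u"
  proof (rule DERIV_nonneg_imp_nondecreasing[OF assms])
    fix v :: real assume v: "0 \<le> v" "v \<le> u"
    have "(?f has_real_derivative (1 - v + v\<^sup>2 - 1 / (1 + v))) (at v)"
      using v by (auto intro!: derivative_eq_intros simp: power2_eq_square)
    moreover have "1 - v + v\<^sup>2 - 1 / (1 + v) = v ^ 3 / (1 + v)"
      using v by (simp add: field_simps power2_eq_square power3_eq_cube)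
    ultimately show "\<exists>y. (?f has_real_derivative y) (at v) \<and> 0 \<le> y"
      using v by fastforce
  qed
  then show ?thesis by simp
qed

lemma ln_one_plus_minus_ge:
  fixes t :: real
  assumes "0 \<le> t" "t < 1"
  shows "2 * t \<le> ln (1 + t) - ln (1 - t)"
proof -
  let ?f = "\<lambda>v::real. ln (1 + v) - ln (1 - v) - 2 * v"
  have "?f 0 \<le> ?f t"
  proof (rule DERIV_nonneg_imp_nondecreasing[OF assms(1)])
    fix v :: real assume "0 \<le> v" "v \<le> t"
    then have v: "0 \<le> v" "v < 1" "v * v < 1"
      using assms by (auto simp: abs_square_less_1 simp flip: power2_eq_square)
    have "(?f has_real_derivative (1 / (1 + v) + 1 / (1 - v) - 2)) (at v)"
      using v by (auto intro!: derivative_eq_intros)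
    moreover have "1 / (1 + v) + 1 / (1 - v) - 2 = 2 * v\<^sup>2 / ((1 + v) * (1 - v))"
      using v by (simp add: field_simps power2_eq_square)
    ultimately show "\<exists>y. (?f has_real_derivative y) (at v) \<and> 0 \<le> y"
      using v by fastforce
  qed
  then show ?thesis by simp
qed

lemma ln_one_plus_minus_le:
  fixes t :: real
  assumes "0 \<le> t" "t < 1"
  shows "ln (1 + t) - ln (1 - t) \<le> 2 * t + 2 / 3 * t ^ 3 / (1 - t\<^sup>2)"
proof -
  define D where "D = 1 - t\<^sup>2"
  have "t\<^sup>2 < 1" using assms by (simp add: abs_square_less_1)
  then have D: "D > 0" by (simp add: D_def)
  let ?f = "\<lambda>v::real. 2 * v + 2 / 3 * v ^ 3 / D - (ln (1 + v) - ln (1 - v))"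
  have "?f 0 \<le> ?f t"
  proof (rule DERIV_nonneg_imp_nondecreasing[OF assms(1)])
    fix v :: real assume "0 \<le> v" "v \<le> t"
    then have v: "0 \<le> v" "v < 1" "v * v < 1" "v\<^sup>2 \<le> t\<^sup>2"
      using assms by (auto intro: power_mono simp: abs_square_less_1 simp flip: power2_eq_square)
    have "(?f has_real_derivative (2 + 2 * v\<^sup>2 / D - (1 / (1 + v) + 1 / (1 - v)))) (at v)"
      using v D by (auto intro!: derivative_eq_intros simp: power2_eq_square)
    moreover have "1 / (1 + v) + 1 / (1 - v) = 2 + 2 * v\<^sup>2 / ((1 + v) * (1 - v))"
      using v by (simp add: field_simps power2_eq_square)
    moreover have "2 * v\<^sup>2 / ((1 + v) * (1 - v)) \<le> 2 * v\<^sup>2 / D"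
    proof (rule divide_left_mono)
      show "D \<le> (1 + v) * (1 - v)" using v by (simp add: D_def algebra_simps power2_eq_square)
      show "0 < (1 + v) * (1 - v) * D" using v D by simp
    qed simp
    ultimately show "\<exists>y. (?f has_real_derivative y) (at v) \<and> 0 \<le> y"
      by fastforce
  qed
  then show ?thesis by (simp add: D_def)
qed

definition stirling_remainder :: "nat \<Rightarrow> real" where
  "stirling_remainder n = ln (fact n) - (real n + 1 / 2) * ln (real n) + real n"

lemma ln_fact_Suc: "ln (fact (Suc n) :: real) = ln (fact n) + ln (real (Suc n))"
  by (simp add: ln_mult)

text \<open>With \<open>t = 1 / (2n + 1)\<close> one has \<open>ln (1 + 1/n) = ln (1 + t) - ln (1 - t)\<close>, so the bounds
  on \<open>ln (1 + t) - ln (1 - t)\<close> control the decrease of the remainder.\<close>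
lemma stirling_remainder_step:
  assumes "n \<ge> 1"
  shows "0 \<le> stirling_remainder n - stirling_remainder (Suc n)"
    and "stirling_remainder n - stirling_remainder (Suc n)
      \<le> 1 / (12 * real n) - 1 / (12 * real (Suc n))"
proof -
  have n: "real n > 0" using assms by simp
  have diff: "stirling_remainder n - stirling_remainder (Suc n)
      = (real n + 1 / 2) * (ln (real n + 1) - ln (real n)) - 1"
    unfolding stirling_remainder_def ln_fact_Suc by (simp add: algebra_simps)
  define t where "t = 1 / (2 * real n + 1)"
  have t: "0 \<le> t" "t < 1" and "t \<noteq> 0" using n by (auto simp: t_def)
  have "1 + t = (real n + 1) * (2 * t)" "1 - t = real n * (2 * t)"
    using n by (simp_all add: t_def field_simps)
  then have ln_ratio: "ln (1 + t) - ln (1 - t) = ln (real n + 1) - ln (real n)"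
    using n \<open>t \<noteq> 0\<close> by (simp add: ln_mult)
  have half: "(real n + 1 / 2) * (2 * t) = 1" using n by (simp add: t_def field_simps)
  have "(2 * real n + 1) * t = 1" using n by (simp add: t_def)
  then have "1 - t\<^sup>2 = ((2 * real n + 1) * t)\<^sup>2 - t\<^sup>2" by simp
  also have "\<dots> = 4 * real n * (real n + 1) * t\<^sup>2" by (simp add: power2_eq_square algebra_simps)
  finally have one_minus_t_sq: "1 - t\<^sup>2 = 4 * real n * (real n + 1) * t\<^sup>2" .
  have cubic_ratio: "t ^ 3 / (1 - t\<^sup>2) = t / (4 * real n * (real n + 1))"
    unfolding one_minus_t_sq using n \<open>t \<noteq> 0\<close> by (simp add: power2_eq_square power3_eq_cube)
  have "(real n + 1 / 2) * (2 / 3 * t ^ 3 / (1 - t\<^sup>2))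
      = (real n + 1 / 2) * (2 * t) / (12 * real n * (real n + 1))"
    unfolding times_divide_eq_right[symmetric] cubic_ratio by (simp add: field_simps)
  also have "\<dots> = 1 / (12 * real n * (real n + 1))" by (simp only: half)
  also have "\<dots> = 1 / (12 * real n) - 1 / (12 * real (Suc n))"
    using n by (simp add: field_simps)
  finally have cubic: "(real n + 1 / 2) * (2 / 3 * t ^ 3 / (1 - t\<^sup>2))
      = 1 / (12 * real n) - 1 / (12 * real (Suc n))" .
  have p: "real n + 1 / 2 \<ge> 0" by simp
  show "0 \<le> stirling_remainder n - stirling_remainder (Suc n)"
    using mult_left_mono[OF ln_one_plus_minus_ge[OF t] p] half ln_ratio diff by simp
  show "stirling_remainder n - stirling_remainder (Suc n)
      \<le> 1 / (12 * real n) - 1 / (12 * real (Suc n))"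
    using mult_left_mono[OF ln_one_plus_minus_le[OF t] p] half cubic ln_ratio diff
    by (simp add: distrib_left)
qed

lemma stirling_remainder_diff_bounds:
  assumes "n \<ge> 1"
  shows "0 \<le> stirling_remainder n - stirling_remainder (n + m)
    \<and> stirling_remainder n - stirling_remainder (n + m)
      \<le> 1 / (12 * real n) - 1 / (12 * real (n + m))"
proof (induction m)
  case (Suc m)
  with stirling_remainder_step[of "n + m"] assms show ?case by simp
qed simp

lemma stirling_remainder_double_tendsto:
  "(\<lambda>n. stirling_remainder (2 * n) - stirling_remainder n) \<longlonglongrightarrow> 0"
proof (rule Lim_null_comparison)
  show "\<forall>\<^sub>F n in sequentially.
      norm (stirling_remainder (2 * n) - stirling_remainder n) \<le> 1 / 12 * inverse (real n)"
    using eventually_ge_at_top[of "1::nat"]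
  proof eventually_elim
    case (elim n)
    then have "0 \<le> stirling_remainder n - stirling_remainder (n + n)"
      "stirling_remainder n - stirling_remainder (n + n)
        \<le> 1 / (12 * real n) - 1 / (12 * real (n + n))"
      using stirling_remainder_diff_bounds[of n n] by auto
    moreover have "1 / (12 * real (n + n)) \<ge> 0" "1 / (12 * real n) \<ge> 0" by simp_all
    ultimately have
      "\<bar>stirling_remainder (n + n) - stirling_remainder n\<bar> \<le> 1 / (12 * real n)"
      by (auto simp: abs_le_iff)
    then show ?case by (simp add: mult_2 inverse_eq_divide)
  qed
  show "(\<lambda>n. 1 / 12 * inverse (real n)) \<longlonglongrightarrow> 0"
    by (rule tendsto_mult_right_zero) (rule lim_inverse_n)
qed

lemma sum_ln_odd:
  "(\<Sum>k<n. ln (real (2 * k + 1))) = ln (fact (2 * n)) - real n * ln 2 - ln (fact n)"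
proof (induction n)
  case (Suc n)
  have "2 * Suc n = Suc (Suc (2 * n))" by simp
  then have "ln (fact (2 * Suc n) :: real)
      = ln (fact (2 * n)) + ln (real (2 * n + 1)) + ln (real (2 * n + 2))"
    by (simp only: ln_fact_Suc) simp
  moreover have "ln (real (2 * n + 2)) = ln 2 + ln (real (Suc n))"
    using ln_mult[of 2 "real (Suc n)"] by (simp add: algebra_simps)
  ultimately show ?case
    using Suc.IH ln_fact_Suc[of n] by (simp del: fact_Suc add: ring_distribs)
qed simp

lemma mult_ln_one_plus_tendsto:
  fixes c :: real
  shows "(\<lambda>n. real n * ln (1 + c / real n)) \<longlonglongrightarrow> c"
proof -
  have "(\<lambda>n. ln ((1 + c / real n) ^ n)) \<longlonglongrightarrow> ln (exp c)"
    by (intro tendsto_ln tendsto_exp_limit_sequentially) simp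
  then show ?thesis
    by (simp add: ln_realpow)
qed

lemma sum_ln_odd_minus_tendsto:
  fixes x :: real
  assumes "x > -1"
  shows "(\<lambda>n. (\<Sum>k<n. ln (real (2 * k + 1))) - real n * ln (real (2 * n + 1) + x) + real n)
    \<longlonglongrightarrow> ln 2 / 2 - (1 + x) / 2"
proof -
  define c where "c = (1 + x) / 2"
  have lim: "(\<lambda>n. stirling_remainder (2 * n) - stirling_remainder n + ln 2 / 2
      - real n * ln (1 + c / real n)) \<longlonglongrightarrow> 0 + ln 2 / 2 - c" (is "?f \<longlonglongrightarrow> _")
    by (intro tendsto_intros stirling_remainder_double_tendsto mult_ln_one_plus_tendsto)
  have eq: "stirling_remainder (2 * n) - stirling_remainder n + ln 2 / 2
      - real n * ln (1 + c / real n)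
      = (\<Sum>k<n. ln (real (2 * k + 1))) - real n * ln (real (2 * n + 1) + x) + real n"
    if "n \<ge> 1" for n
  proof -
    have n: "real n > 0" using that by simp
    have "real (2 * n + 1) + x = 2 * real n * (1 + c / real n)"
      using n by (simp add: c_def field_simps)
    moreover have "1 + c / real n > 0"
      using n assms by (simp add: c_def add_pos_nonneg)
    ultimately have "ln (real (2 * n + 1) + x) = ln 2 + ln (real n) + ln (1 + c / real n)"
      using n by (simp add: ln_mult)
    moreover have "ln (real (2 * n)) = ln 2 + ln (real n)"
      using n by (simp add: ln_mult)
    ultimately show ?thesis
      unfolding sum_ln_odd stirling_remainder_def by (simp add: algebra_simps)
  qed
  have "\<forall>\<^sub>F n in sequentially. ?f n
      = (\<Sum>k<n. ln (real (2 * k + 1))) - real n * ln (real (2 * n + 1) + x) + real n"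
    by (rule eventually_mono[OF eventually_ge_at_top[of 1]]) (rule eq)
  from Lim_transform_eventually[OF lim this] show ?thesis
    by (simp add: c_def)
qed

lemma prod_atLeastAtMost_even_odd:
  fixes f :: "nat \<Rightarrow> 'a::comm_monoid_mult"
  shows "(\<Prod>k=1..2 * n. f k) = (\<Prod>j=1..n. f (2 * j)) * (\<Prod>k<n. f (2 * k + 1))"
proof (induction n)
  case (Suc n)
  have "{1..2 * Suc n} = insert (2 * n + 2) (insert (2 * n + 1) {1..2 * n})" by auto
  then have "(\<Prod>k=1..2 * Suc n. f k)
      = f (2 * n + 2) * f (2 * n + 1) * (\<Prod>k=1..2 * n. f k)"
    by (simp add: mult.assoc)
  with Suc show ?case by (simp add: ac_simps)
qed simp

lemma cos_product_odd:
  fixes x :: real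
  assumes "\<bar>x\<bar> < 2"
  shows "(\<lambda>n. \<Prod>k<n. 1 - x\<^sup>2 / (real (2 * k + 1))\<^sup>2) \<longlonglongrightarrow> cos (pi * x / 2)"
proof (cases "x = 0")
  case False
  define P where "P y n = (\<Prod>k=1..n. 1 - y\<^sup>2 / (real k)\<^sup>2)" for y :: real and n :: nat
  have "(x / 2)\<^sup>2 < 1" using assms by (simp add: abs_square_less_1 flip: abs_less_iff)
  then have P_half_pos: "P (x / 2) n > 0" for n
    unfolding P_def by (intro prod_pos) (auto simp: field_simps intro: less_le_trans)
  have "(\<Prod>j=1..n. 1 - x\<^sup>2 / (real (2 * j))\<^sup>2) = P (x / 2) n" for n
    unfolding P_def by (intro prod.cong refl) (simp add: power_divide power_mult_distrib)
  then have "P x (2 * n) = P (x / 2) n * (\<Prod>k<n. 1 - x\<^sup>2 / (real (2 * k + 1))\<^sup>2)" for n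
    unfolding P_def prod_atLeastAtMost_even_odd by simp
  then have odd_eq:
      "(\<Prod>k<n. 1 - x\<^sup>2 / (real (2 * k + 1))\<^sup>2) = P x (2 * n) / P (x / 2) n" for n
    using P_half_pos[of n] by simp
  have "(\<lambda>n. P x (2 * n)) \<longlonglongrightarrow> sin (pi * x) / (pi * x)"
    using LIMSEQ_subseq_LIMSEQ[OF sin_product_formula_real'[OF False], of "\<lambda>n. 2 * n"]
    by (simp add: P_def strict_mono_def o_def)
  moreover have "(\<lambda>n. P (x / 2) n) \<longlonglongrightarrow> sin (pi * (x / 2)) / (pi * (x / 2))"
    unfolding P_def using sin_product_formula_real'[of "x / 2"] False by simp
  moreover have "sin (pi * (x / 2)) \<noteq> 0"
    using assms False by (auto simp: sin_zero_iff_int2)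
  ultimately have "(\<lambda>n. P x (2 * n) / P (x / 2) n)
      \<longlonglongrightarrow> (sin (pi * x) / (pi * x)) / (sin (pi * (x / 2)) / (pi * (x / 2)))"
    using False by (intro tendsto_divide) auto
  moreover have
      "(sin (pi * x) / (pi * x)) / (sin (pi * (x / 2)) / (pi * (x / 2))) = cos (pi * x / 2)"
    using sin_double[of "pi * (x / 2)"] \<open>sin (pi * (x / 2)) \<noteq> 0\<close> False
    by (simp add: field_simps)
  ultimately show ?thesis
    unfolding odd_eq by simp
qed simp

definition barnes_factor :: "real \<Rightarrow> nat \<Rightarrow> real" where
  "barnes_factor z k = (1 + z / real (Suc k)) ^ Suc k * exp (- z + z\<^sup>2 / (2 * real (Suc k)))"

lemma one_plus_divide_Suc_pos:
  fixes z :: real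
  assumes "z > -1"
  shows "1 + z / real (Suc k) > 0"
proof (cases "z \<ge> 0")
  case False
  then have "z \<le> z / real (Suc k)" by (simp add: le_divide_eq mult_le_cancel_left1)
  with assms show ?thesis by linarith
qed (simp add: add_pos_nonneg)

lemma ln_barnes_factor:
  assumes "z > -1"
  shows "ln (barnes_factor z k)
    = real (Suc k) * ln (1 + z / real (Suc k)) - z + z\<^sup>2 / (2 * real (Suc k))"
proof -
  have "ln (barnes_factor z k)
      = ln ((1 + z / real (Suc k)) ^ Suc k) + (- z + z\<^sup>2 / (2 * real (Suc k)))"
    using one_plus_divide_Suc_pos[OF assms, of k] unfolding barnes_factor_def
    by (subst ln_mult) auto
  then show ?thesis
    by (simp only: ln_realpow)
qed

lemma barnesG_eq_exp:
  assumes "z > -1" and "(\<lambda>k. ln (barnes_factor z k)) sums T"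
  shows "barnesG (z + 1)
    = exp (z / 2 * ln (2 * pi) - (z + (1 + euler_mascheroni) * z\<^sup>2) / 2 + T)"
proof -
  have "barnes_factor z k = exp (ln (barnes_factor z k))" for k
    using one_plus_divide_Suc_pos[OF assms(1), of k] by (simp add: barnes_factor_def)
  then have "prodinf (barnes_factor z) = exp T"
    using prodinf_exp[of "\<lambda>k. ln (barnes_factor z k)"] assms(2) by (simp add: sums_iff)
  then have "barnesG (z + 1)
      = exp (z / 2 * ln (2 * pi)) * exp (- (z + (1 + euler_mascheroni) * z\<^sup>2) / 2) * exp T"
    by (simp add: barnesG_def barnes_factor_def[abs_def] powr_def)
  then show ?thesis
    by (simp add: mult_exp_exp field_simps)
qed

text \<open>Each log-factor equals \<open>m (ln (1 + w) - w + w\<^sup>2/2)\<close> with \<open>w = z / m\<close>, which lies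
  between \<open>0\<close> and \<open>m w\<^sup>3/3 = z\<^sup>3 / (3 m\<^sup>2)\<close>.\<close>
lemma summable_ln_barnes_factor:
  fixes z :: real
  assumes "z \<ge> 0"
  shows "summable (\<lambda>k. ln (barnes_factor z k))"
proof (rule summable_comparison_test')
  have "summable (\<lambda>n. inverse (real n ^ 2))" by (rule inverse_power_summable) simp
  then have "summable (\<lambda>k. inverse (real (Suc k) ^ 2))" by (rule summable_Suc_iff[THEN iffD2])
  then show "summable (\<lambda>k. z ^ 3 / 3 * inverse (real (Suc k) ^ 2))" by (rule summable_mult)
  fix k :: nat
  define m where "m = real (Suc k)"
  define w where "w = z / m"
  have m: "m \<ge> 1" and w: "w \<ge> 0" using assms by (simp_all add: m_def w_def)
  from ln_barnes_factor[of z k] assms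
  have "ln (barnes_factor z k) = m * ln (1 + w) - z + z\<^sup>2 / (2 * m)"
    unfolding m_def w_def by simp
  also have "\<dots> = m * (ln (1 + w) - w + w\<^sup>2 / 2)"
    using m by (simp add: w_def field_simps power2_eq_square)
  finally have "ln (barnes_factor z k) = m * (ln (1 + w) - w + w\<^sup>2 / 2)" .
  moreover have "0 \<le> ln (1 + w) - w + w\<^sup>2 / 2" "ln (1 + w) - w + w\<^sup>2 / 2 \<le> w ^ 3 / 3"
    using ln_one_plus_ge_quadratic[OF w] ln_one_plus_le_cubic[OF w] by simp_all
  ultimately have "0 \<le> ln (barnes_factor z k)" "ln (barnes_factor z k) \<le> m * (w ^ 3 / 3)"
    using m by (simp_all add: mult_left_mono)
  moreover have "m * (w ^ 3 / 3) = z ^ 3 / 3 * inverse (m ^ 2)"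
    using m by (simp add: w_def field_simps power2_eq_square power3_eq_cube)
  ultimately show "norm (ln (barnes_factor z k)) \<le> z ^ 3 / 3 * inverse (real (Suc k) ^ 2)"
    by (simp add: m_def)
qed

definition double_cosine_log :: "real \<Rightarrow> nat \<Rightarrow> real" where
  "double_cosine_log x k =
     real (2 * k + 1) / 2 * (ln (real (2 * k + 1) - x) - ln (real (2 * k + 1) + x)) + x"

lemma doubleCosine2_half_eq_prodinf:
  fixes x :: real
  assumes "\<bar>x\<bar> < 1"
  shows "doubleCosine2 (x / 2) = prodinf (\<lambda>k. exp (double_cosine_log x k))"
  unfolding doubleCosine2_def
proof (intro arg_cong[where f = prodinf] ext)
  fix k :: nat
  define n where "n = real (2 * k + 1)"
  have n: "n \<ge> 1" "n - x > 0" "n + x > 0" using assms by (auto simp: n_def)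
  have "x / 2 / (n / 2) = x / n" by simp
  moreover have "1 - x / n = (n - x) / n" "1 + x / n = (n + x) / n"
    using n by (simp_all add: field_simps)
  ultimately have ratio: "(1 - x / 2 / (n / 2)) / (1 + x / 2 / (n / 2)) = (n - x) / (n + x)"
    using n by simp
  show "(let n = real (2 * k + 1) in
      ((1 - x / 2 / (n / 2)) / (1 + x / 2 / (n / 2))) powr (n / 2) * exp (2 * (x / 2)))
    = exp (double_cosine_log x k)"
    unfolding Let_def double_cosine_log_def n_def[symmetric] ratio
    using n by (simp add: powr_def ln_div mult_exp_exp)
qed

text \<open>With \<open>n = 2k + 1\<close> and \<open>v = x / n \<le> 1/3\<close> the term is
  \<open>n v - n/2 (ln (1 + v) - ln (1 - v))\<close>, of size \<open>O(n v\<^sup>3) = O(1/k\<^sup>2)\<close>.\<close>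
lemma summable_double_cosine_log:
  fixes x :: real
  assumes "0 \<le> x" "x < 1"
  shows "summable (double_cosine_log x)"
proof (rule summable_comparison_test'[where N = 1])
  show "summable (\<lambda>k. inverse (real k ^ 2))" by (rule inverse_power_summable) simp
  fix k :: nat assume k: "k \<ge> 1"
  define n where "n = real (2 * k + 1)"
  define v where "v = x / n"
  have n: "n \<ge> 3" using k by (simp add: n_def)
  have v: "0 \<le> v" "v \<le> 1 / n" "v \<le> 1 / 3" "v < 1"
    using assms n by (auto simp: v_def divide_right_mono divide_le_eq)
  have "n + x = n * (1 + v)" "n - x = n * (1 - v)" and x: "x = n * v"
    using n by (simp_all add: v_def field_simps)
  then have "ln (n + x) = ln n + ln (1 + v)" "ln (n - x) = ln n + ln (1 - v)"
    using n v by (simp_all add: ln_mult)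
  then have term_eq: "double_cosine_log x k = n * v - n / 2 * (ln (1 + v) - ln (1 - v))"
    unfolding double_cosine_log_def n_def[symmetric] using x by (simp add: algebra_simps)
  have "0 \<le> - double_cosine_log x k"
    using mult_left_mono[OF ln_one_plus_minus_ge[OF v(1,4)], of "n / 2"] n
    by (simp add: term_eq)
  moreover have "- double_cosine_log x k \<le> n / 3 * (v ^ 3 / (1 - v\<^sup>2))"
    using mult_left_mono[OF ln_one_plus_minus_le[OF v(1,4)], of "n / 2"] n
    by (simp add: term_eq algebra_simps)
  moreover have "n / 3 * (v ^ 3 / (1 - v\<^sup>2)) \<le> n / 3 * ((1 / n) ^ 3 / (1 / 2))"
  proof -
    have "v\<^sup>2 \<le> (1 / 3)\<^sup>2" using v n by (intro power_mono) (auto simp: divide_le_eq)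
    then have "1 / 2 \<le> 1 - v\<^sup>2" by (simp add: power2_eq_square)
    moreover have "v ^ 3 \<le> (1 / n) ^ 3" using v by (intro power_mono) auto
    ultimately show ?thesis
      using n v by (intro mult_left_mono frac_le) auto
  qed
  moreover have "n / 3 * ((1 / n) ^ 3 / (1 / 2)) \<le> inverse (real k ^ 2)"
  proof -
    have "n / 3 * ((1 / n) ^ 3 / (1 / 2)) = 2 / (3 * n\<^sup>2)"
      using n by (simp add: field_simps power2_eq_square power3_eq_cube)
    also have "\<dots> \<le> 1 / n\<^sup>2" using n by (simp add: field_simps)
    also have "\<dots> \<le> inverse (real k ^ 2)"
      using power_mono[of "real k" n 2] k n by (simp add: n_def inverse_eq_divide frac_le)
    finally show ?thesis .
  qed
  ultimately show "norm (double_cosine_log x k) \<le> inverse (real k ^ 2)"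
    unfolding real_norm_def by linarith
qed

lemma ln_doubleCosine2_half:
  fixes x :: real
  assumes "0 \<le> x" "x < 1"
  shows "ln (doubleCosine2 (x / 2)) = suminf (double_cosine_log x)"
  using doubleCosine2_half_eq_prodinf[of x] prodinf_exp[OF summable_double_cosine_log] assms
  by simp

lemma ln_barnes_factor_diff_double_cosine_log:
  fixes x :: real
  assumes "\<bar>x\<bar> < 1"
  shows "ln (barnes_factor (- (1 + x) / 2) k) - ln (barnes_factor ((1 + x) / 2) k)
      - double_cosine_log x k
    = (ln (real (2 * k + 1) - x) + ln (real (2 * k + 1) + x)) / 2
      + real k * ln (real (2 * k + 1) + x) - real (Suc k) * ln (real (2 * Suc k + 1) + x) + 1"
proof -
  define c where "c = (1 + x) / 2"
  define m where "m = real (Suc k)"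
  have c: "- c > -1" "c > -1" using assms by (simp_all add: c_def)
  have "1 + - c / m = (real (2 * k + 1) - x) / (2 * m)"
    "1 + c / m = (real (2 * Suc k + 1) + x) / (2 * m)"
    by (simp_all add: c_def m_def field_simps)
  moreover have "real (2 * k + 1) - x > 0" "real (2 * Suc k + 1) + x > 0" using assms by auto
  ultimately have "ln (1 + - c / m) = ln (real (2 * k + 1) - x) - ln (2 * m)"
    "ln (1 + c / m) = ln (real (2 * Suc k + 1) + x) - ln (2 * m)"
    by (simp_all add: ln_div m_def)
  then have A: "ln (barnes_factor (- c) k)
      = m * (ln (real (2 * k + 1) - x) - ln (2 * m)) + c + c\<^sup>2 / (2 * m)"
    and B: "ln (barnes_factor c k)
      = m * (ln (real (2 * Suc k + 1) + x) - ln (2 * m)) - c + c\<^sup>2 / (2 * m)"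
    using ln_barnes_factor[OF c(1), of k] ln_barnes_factor[OF c(2), of k] by (simp_all add: m_def)
  have neg_c: "- (1 + x) / 2 = - c" by (simp add: c_def field_simps)
  show ?thesis
    unfolding neg_c c_def[symmetric] A B double_cosine_log_def
    by (simp add: c_def m_def algebra_simps add_divide_distrib)
qed

lemma sum_ln_barnes_factor_diff_double_cosine_log:
  fixes x :: real
  assumes "\<bar>x\<bar> < 1"
  shows "(\<Sum>k<n. ln (barnes_factor (- (1 + x) / 2) k) - ln (barnes_factor ((1 + x) / 2) k)
      - double_cosine_log x k)
    = (\<Sum>k<n. (ln (real (2 * k + 1) - x) + ln (real (2 * k + 1) + x)) / 2)
      - real n * ln (real (2 * n + 1) + x) + real n"
proof (induction n)
  case (Suc n)
  with ln_barnes_factor_diff_double_cosine_log[OF assms, of n] show ?case by simp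
qed simp

lemma sum_ln_odd_pm_tendsto:
  fixes x :: real
  assumes "\<bar>x\<bar> < 1"
  shows "(\<lambda>n. (\<Sum>k<n. (ln (real (2 * k + 1) - x) + ln (real (2 * k + 1) + x)) / 2)
      - real n * ln (real (2 * n + 1) + x) + real n)
    \<longlonglongrightarrow> ln (cos (pi * x / 2)) / 2 + (ln 2 / 2 - (1 + x) / 2)"
proof -
  define q where "q k = 1 - x\<^sup>2 / (real (2 * k + 1))\<^sup>2" for k
  have "x\<^sup>2 < 1" using assms by (simp add: abs_square_less_1)
  then have q_pos: "q k > 0" for k
    unfolding q_def by (simp add: field_simps) (smt (verit) one_le_power of_nat_0_le_iff)
  have "(ln (real (2 * k + 1) - x) + ln (real (2 * k + 1) + x)) / 2
      = ln (q k) / 2 + ln (real (2 * k + 1))" for k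
  proof -
    define n where "n = real (2 * k + 1)"
    have pos: "n - x > 0" "n + x > 0" "n > 0" using assms by (auto simp: n_def)
    have "ln (n - x) + ln (n + x) = ln ((n - x) * (n + x))" using pos by (simp add: ln_mult)
    also have "(n - x) * (n + x) = n\<^sup>2 * q k"
      unfolding q_def n_def[symmetric] using pos(3) by (simp add: field_simps power2_eq_square)
    also have "ln (n\<^sup>2 * q k) = 2 * ln n + ln (q k)"
      using pos q_pos[of k] by (simp add: ln_mult ln_realpow)
    finally have "ln (n - x) + ln (n + x) = 2 * ln n + ln (q k)" .
    then show ?thesis by (simp add: n_def)
  qed
  then have split: "(\<Sum>k<n. (ln (real (2 * k + 1) - x) + ln (real (2 * k + 1) + x)) / 2)
      = ln (\<Prod>k<n. q k) / 2 + (\<Sum>k<n. ln (real (2 * k + 1)))" for n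
    using ln_prod[of "{..<n}" q] q_pos
    by (simp add: sum.distrib sum_divide_distrib add_divide_distrib less_imp_neq[symmetric])
  have "(\<lambda>n. ln (\<Prod>k<n. q k) / 2) \<longlonglongrightarrow> ln (cos (pi * x / 2)) / 2"
  proof (intro tendsto_intros)
    show "(\<lambda>n. \<Prod>k<n. q k) \<longlonglongrightarrow> cos (pi * x / 2)"
      unfolding q_def using assms by (intro cos_product_odd) simp
    have "\<bar>pi * x\<bar> < pi" using assms by (simp add: abs_mult)
    then show "cos (pi * x / 2) \<noteq> 0"
      by (intro cos_gt_zero_pi[THEN less_imp_neq, symmetric]) (auto simp: abs_less_iff)
  qed simp
  from tendsto_add[OF this sum_ln_odd_minus_tendsto[of x]] assms show ?thesis
    unfolding split by (simp add: algebra_simps)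
qed

lemma ln_barnesG_ratio:
  fixes x :: real
  assumes "0 \<le> x" "x < 1"
  shows "ln (barnesG (1 / 2 - x / 2) / barnesG (3 / 2 + x / 2))
    = ln (cos (pi * x / 2)) / 2 + ln 2 / 2 - (1 + x) / 2 * ln (2 * pi)
      + suminf (double_cosine_log x)"
proof -
  define c where "c = (1 + x) / 2"
  define S where "S = suminf (double_cosine_log x)"
  define T where "T = suminf (\<lambda>k. ln (barnes_factor c k))"
  define D where "D = ln (cos (pi * x / 2)) / 2 + (ln 2 / 2 - c)"
  have x: "\<bar>x\<bar> < 1" and c: "- c > -1" "c > -1" "c \<ge> 0" using assms by (auto simp: c_def)
  have S: "double_cosine_log x sums S"
    using summable_double_cosine_log[OF assms] by (simp add: S_def summable_sums)
  have T: "(\<lambda>k. ln (barnes_factor c k)) sums T"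
    using summable_ln_barnes_factor[OF c(3)] by (simp add: T_def summable_sums)
  have "(\<lambda>n. \<Sum>k<n. ln (barnes_factor (- c) k) - ln (barnes_factor c k) - double_cosine_log x k)
      \<longlonglongrightarrow> D"
    using sum_ln_odd_pm_tendsto[OF x]
    unfolding sum_ln_barnes_factor_diff_double_cosine_log[OF x] minus_divide_left c_def D_def .
  then have "(\<lambda>k. (ln (barnes_factor (- c) k) - ln (barnes_factor c k) - double_cosine_log x k)
      + double_cosine_log x k + ln (barnes_factor c k)) sums (D + S + T)"
    by (intro sums_add S T) (simp add: sums_def)
  then have sums_neg_c: "(\<lambda>k. ln (barnes_factor (- c) k)) sums (D + S + T)" by simp
  have args: "1 / 2 - x / 2 = - c + 1" "3 / 2 + x / 2 = c + 1"
    by (simp_all add: c_def field_simps)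
  have "ln (barnesG (1 / 2 - x / 2) / barnesG (3 / 2 + x / 2))
      = ln (barnesG (- c + 1) / barnesG (c + 1))"
    by (simp only: args)
  also from barnesG_eq_exp[OF c(1) sums_neg_c] barnesG_eq_exp[OF c(2) T]
  have "\<dots> = (- c / 2 * ln (2 * pi) - (- c + (1 + euler_mascheroni) * (- c)\<^sup>2) / 2 + (D + S + T))
        - (c / 2 * ln (2 * pi) - (c + (1 + euler_mascheroni) * c\<^sup>2) / 2 + T)"
    by (simp only: exp_diff[symmetric] ln_exp)
  also have "\<dots> = ln (cos (pi * x / 2)) / 2 + ln 2 / 2 - c * ln (2 * pi) + S"
    by (simp add: D_def power2_minus algebra_simps add_divide_distrib diff_divide_distrib)
  finally show ?thesis
    unfolding c_def S_def .
qed

theorem mainTheorem18: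
  fixes x :: real
  assumes "0 \<le> x" and "x < 1"
  shows "ln (doubleCosine2 (x / 2)) =
    x / 2 * ln (2 * pi) + ln (sqrt pi) - 1 / 2 * ln (cos (pi * x / 2))
    + ln (barnesG (1 / 2 - x / 2) / barnesG (3 / 2 + x / 2))"
proof -
  have logs: "ln (sqrt pi) = ln pi / 2" "ln (2 * pi) = ln 2 + ln pi"
    by (simp_all add: ln_sqrt ln_mult)
  show ?thesis
    unfolding ln_doubleCosine2_half[OF assms] ln_barnesG_ratio[OF assms] logs
    by (simp add: algebra_simps)
qed

end
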